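(* Let $\mathcal{C}$ be a concept class over $\{\pm1\}^n$, $\mathcal{D}$ a class of distributions closed under restrictions, $D^\star$ a distribution with a depth-$d$ decomposition into distributions in $\mathcal{D}$, and $A$ a base learner using $m$ samples that learns $\mathcal{C}$ to expected error $\le\varepsilon$ under any $D\in\mathcal{D}$. Let \[ m_{\mathrm{train}} \ge \frac{2^d}{\varepsilon}\cdot\max(2m, 8), \] let $f\in\mathcal{C}$, and let $S_{\mathrm{train}}$ consist of $m_{\mathrm{train}}$ i.i.d. examples from $D^\star_f$. Let $\mathcal{H}$ be the random mapping $\rho\mapsto A((S_{\mathrm{train}})_\rho)$ over all depth-$d$ restrictions $\rho$ (randomness from $S_{\mathrm{train}}$ and $A$). Then \[ \mathbb{E}_{\mathcal{H}}\left[\min_{\text{depth-}d\text{ tree }T} \mathrm{error}(T\circ\mathcal{H}, D^\star_f)\right] \le 2\varepsilon. \]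
   Context: A restriction is $\rho\in\{\pm1,\star\}^n$; $x\in\rho$ means $x_i=\rho_i$ or $\rho_i=\star$ for all $i$; depth of $\rho$ = number of non-$\star$ coordinates. $D_\rho$ is $D$ conditioned on $x\in\rho$; for a labeled set $S$, $S_\rho=\{(x,y)\in S:x\in\rho\}$. $\mathcal{D}$ is closed under restrictions if $D\in\mathcal{D}\Rightarrow D_\rho\in\mathcal{D}$ for all $\rho$. $D_f$ is the distribution of $(x,f(x))$, $x\sim D$; $\mathrm{error}(h,P)=\Pr_{(x,y)\sim P}[h(x)\ne y]$. $A$ learns $\mathcal{C}$ to expected error $\varepsilon$ under $D$ using $m$ samples if for every $f\in\mathcal{C}$, given (at least) $m$ i.i.d. samples from $D_f$, its output $h$ has $\mathbb{E}[\mathrm{error}(h,D_f)]\le\varepsilon$. A depth-$d$ decision tree is a set of $2^d$ leaf restrictions defined recursively: depth $0$ is the all-$\star$ restriction; depth $d\ge1$ has a root coordinate $i$ and two depth-$(d-1)$ subtrees not fixing $i$, whose leaves get coordinate $i$ set to $-1$ and $+1$. $D^\star$ has a depth-$d$ decomposition into $\mathcal{D}$ if some depth-$d$ tree $T$ has $(D^\star)_\ell\in\mathcal{D}$ for every leaf $\ell$. $T\circ\mathcal{H}(x)=\mathcal{H}(\ell)(x)$ for the leaf $\ell$ of $T$ containing $x$. *)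

theory Defs
  imports "HOL-Probability.Probability"
begin

text \<open>Points of the cube {+-1}^n are boolean lists of length n (True = +1, False = -1).
Labels +-1 are booleans as well. A restriction is a list of length n over
bool option (None = star, Some b = coordinate fixed to b).\<close>

type_synonym point = "bool list"
type_synonym restriction = "bool option list"
type_synonym hypothesis = "point \<Rightarrow> bool"
type_synonym sample = "(point \<times> bool) list"

definition cube :: "nat \<Rightarrow> point set" where
  "cube n = {x. length x = n}"

definition restrictions :: "nat \<Rightarrow> restriction set" where
  "restrictions n = {\<rho>. length \<rho> = n}"

definition sat :: "restriction \<Rightarrow> point \<Rightarrow> bool" where
  "sat \<rho> x \<longleftrightarrow> (\<forall>i<length \<rho>. \<rho> ! i = None \<or> \<rho> ! i = Some (x ! i))"

definition depth :: "restriction \<Rightarrow> nat" where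
  "depth \<rho> = length (filter (\<lambda>c. c \<noteq> None) \<rho>)"

definition restr_depth :: "nat \<Rightarrow> nat \<Rightarrow> restriction set" where
  "restr_depth n d = {\<rho>. length \<rho> = n \<and> depth \<rho> = d}"

text \<open>D conditioned on x in rho (meaningful when rho has positive mass under D)\<close>
definition restrict_dist :: "point pmf \<Rightarrow> restriction \<Rightarrow> point pmf" where
  "restrict_dist D \<rho> = cond_pmf D {x. sat \<rho> x}"

definition restrict_sample :: "sample \<Rightarrow> restriction \<Rightarrow> sample" where
  "restrict_sample S \<rho> = filter (\<lambda>(x, y). sat \<rho> x) S"

definition closed_under_restrictions :: "nat \<Rightarrow> point pmf set \<Rightarrow> bool" where
  "closed_under_restrictions n DD \<longleftrightarrow>
     (\<forall>D\<in>DD. \<forall>\<rho>\<in>restrictions n. set_pmf D \<inter> {x. sat \<rho> x} \<noteq> {} \<longrightarrow> restrict_dist D \<rho> \<in> DD)"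

definition labeled :: "point pmf \<Rightarrow> hypothesis \<Rightarrow> (point \<times> bool) pmf" where
  "labeled D f = map_pmf (\<lambda>x. (x, f x)) D"

definition error :: "hypothesis \<Rightarrow> (point \<times> bool) pmf \<Rightarrow> real" where
  "error h P = measure_pmf.prob P {(x, y). h x \<noteq> y}"

definition learns :: "hypothesis set \<Rightarrow> (sample \<Rightarrow> hypothesis pmf) \<Rightarrow> real \<Rightarrow> nat \<Rightarrow> point pmf \<Rightarrow> bool" where
  "learns C A eps m D \<longleftrightarrow>
     (\<forall>f\<in>C. \<forall>k\<ge>m. measure_pmf.expectation (replicate_pmf k (labeled D f) \<bind> A)
                       (\<lambda>h. error h (labeled D f)) \<le> eps)"

text \<open>Depth-d decision trees over n variables, represented by their sets of leaf restrictions.\<close>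
inductive is_dtree :: "nat \<Rightarrow> nat \<Rightarrow> restriction set \<Rightarrow> bool" where
  leaf: "is_dtree n 0 {replicate n None}"
| node: "\<lbrakk> i < n; is_dtree n d L0; is_dtree n d L1; \<forall>l\<in>L0 \<union> L1. l ! i = None \<rbrakk>
         \<Longrightarrow> is_dtree n (Suc d) ((\<lambda>l. l[i := Some False]) ` L0 \<union> (\<lambda>l. l[i := Some True]) ` L1)"

definition has_decomposition :: "nat \<Rightarrow> nat \<Rightarrow> point pmf set \<Rightarrow> point pmf \<Rightarrow> bool" where
  "has_decomposition n d DD Dstar \<longleftrightarrow>
     (\<exists>T. is_dtree n d T \<and>
          (\<forall>l\<in>T. set_pmf Dstar \<inter> {x. sat l x} \<noteq> {} \<longrightarrow> restrict_dist Dstar l \<in> DD))"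

definition tree_comp :: "restriction set \<Rightarrow> (restriction \<Rightarrow> hypothesis) \<Rightarrow> hypothesis" where
  "tree_comp T H x = H (THE l. l \<in> T \<and> sat l x) x"

text \<open>The random map H: rho |-> A((S_train)_rho) over all depth-d restrictions rho,
S_train ~ Strain, with independent internal randomness of A for each rho.\<close>
definition hyp_map :: "nat \<Rightarrow> nat \<Rightarrow> (sample \<Rightarrow> hypothesis pmf) \<Rightarrow> sample pmf
                        \<Rightarrow> (restriction \<Rightarrow> hypothesis) pmf" where
  "hyp_map n d A Strain =
     Strain \<bind> (\<lambda>S. Pi_pmf (restr_depth n d) (\<lambda>_. False) (\<lambda>\<rho>. A (restrict_sample S \<rho>)))"

end

theory Submission
  imports Defs
begin

text \<open>Fix a tree T of the decomposition. The error of T \<circ> H is the sum over its leaves l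
of the probability that x falls into l and H l errs there. Given their number
k \<sim> Bin(m_train, p_l), where p_l is the mass of l, the training examples falling into l
are i.i.d. from the restriction of D* to l, so once k \<ge> m the base learner contributes
an expected p_l \<cdot> eps. A leaf with p_l \<le> eps / 2^d loses at most eps / 2^d anyway; for a
heavier leaf the mean m_train \<cdot> p_l is at least max(2m, 8), and Chebyshev's inequality
bounds p_l \<cdot> Pr[k < m] by 4 / m_train \<le> eps / 2^d. Summing over the at most 2^d
leaves gives 2 eps, and the minimum over all trees is at most the error of T.\<close>

lemma integrable_measure_pmf_bounded:
  fixes f :: "'a \<Rightarrow> real"
  assumes "\<And>x. \<bar>f x\<bar> \<le> B"
  shows "integrable (measure_pmf M) f"
  by (rule measure_pmf.integrable_const_bound[where B = B]) (use assms in auto)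

lemma expectation_bind_pmf_bounded:
  fixes f :: "'b \<Rightarrow> real"
  assumes "\<And>x. \<bar>f x\<bar> \<le> B"
  shows "measure_pmf.expectation (M \<bind> N) f =
         measure_pmf.expectation M (\<lambda>x. measure_pmf.expectation (N x) f)"
  unfolding measure_pmf_bind
  by (rule integral_bind[where K = "count_space UNIV" and B = B and B' = 1])
     (use assms in \<open>auto simp: space_subprob_algebra measure_pmf.subprob_space_axioms
                         intro!: measure_pmf.finite_measure_axioms\<close>)

lemma expectation_bind_pmf_finite:
  fixes f :: "'b \<Rightarrow> real"
  assumes fin: "finite (set_pmf (M \<bind> N))"
  shows "measure_pmf.expectation (M \<bind> N) f =
         measure_pmf.expectation M (\<lambda>x. measure_pmf.expectation (N x) f)"
proof -
  define S where "S = set_pmf (M \<bind> N)"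
  define g where "g = (\<lambda>y. if y \<in> S then f y else 0)"
  have "\<bar>g y\<bar> \<le> (\<Sum>y\<in>S. \<bar>f y\<bar>)" for y
    using fin by (auto simp: g_def S_def intro!: member_le_sum sum_nonneg)
  then have "measure_pmf.expectation (M \<bind> N) g =
             measure_pmf.expectation M (\<lambda>x. measure_pmf.expectation (N x) g)"
    by (rule expectation_bind_pmf_bounded)
  moreover have "measure_pmf.expectation (M \<bind> N) f = measure_pmf.expectation (M \<bind> N) g"
    by (intro integral_cong_AE AE_pmfI) (auto simp: g_def S_def)
  moreover have "measure_pmf.expectation M (\<lambda>x. measure_pmf.expectation (N x) g) =
                 measure_pmf.expectation M (\<lambda>x. measure_pmf.expectation (N x) f)"
    by (intro integral_cong_AE AE_pmfI) (auto simp: g_def S_def intro!: integral_cong_AE AE_pmfI)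
  ultimately show ?thesis by simp
qed

lemma measure_cond_pmf:
  assumes "measure_pmf.prob P X > 0"
  shows "measure_pmf.prob (cond_pmf P X) B = measure_pmf.prob P (X \<inter> B) / measure_pmf.prob P X"
proof -
  have ne: "set_pmf P \<inter> X \<noteq> {}"
    using assms measure_pmf_zero_iff[of P X] by auto
  show ?thesis
    unfolding cond_pmf.rep_eq[OF ne]
    using assms by (subst measure_uniform_measure) (auto simp: measure_pmf.emeasure_eq_measure)
qed

lemma cond_pmf_eq_self:
  assumes "set_pmf P \<subseteq> X"
  shows "cond_pmf P X = P"
proof (rule pmf_eqI)
  fix x
  have "measure_pmf.prob P X = 1"
    using assms by (simp add: measure_pmf.prob_eq_1 AE_measure_pmf_iff subset_eq)
  moreover have "set_pmf P \<inter> X \<noteq> {}"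
    using assms set_pmf_not_empty[of P] by blast
  ultimately show "pmf (cond_pmf P X) x = pmf P x"
    using assms by (auto simp: pmf_cond set_pmf_eq)
qed

lemma bernoulli_pmf_1: "bernoulli_pmf 1 = return_pmf True"
  by (rule pmf_eqI) (auto simp: indicator_def)

lemma bind_pmf_if_mem:
  fixes P :: "'a pmf" and X :: "'a set" and Q :: "'a \<Rightarrow> 'b pmf"
  defines "p \<equiv> measure_pmf.prob P X"
  assumes "p > 0"
  shows "P \<bind> (\<lambda>z. if z \<in> X then Q z else R) =
         bernoulli_pmf p \<bind> (\<lambda>b. if b then cond_pmf P X \<bind> Q else R)"
proof (cases "p = 1")
  case True
  then have "measure_pmf.prob P (- X) = 0"
    using measure_pmf.prob_compl[of X P] by (simp add: Compl_eq_Diff_UNIV p_def)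
  then have sub: "set_pmf P \<subseteq> X"
    using measure_pmf_zero_iff[of P "- X"] by auto
  then have "P \<bind> (\<lambda>z. if z \<in> X then Q z else R) = P \<bind> Q"
    by (intro bind_pmf_cong) auto
  then show ?thesis
    using True sub by (simp add: bernoulli_pmf_1 cond_pmf_eq_self bind_return_pmf)
next
  case False
  then have p1: "p < 1"
    using measure_pmf.prob_le_1[of P X] unfolding p_def by linarith
  have compl: "measure_pmf.prob P (- X) = 1 - p"
    using measure_pmf.prob_compl[of X P] by (simp add: Compl_eq_Diff_UNIV p_def)
  have ne: "set_pmf P \<inter> X \<noteq> {}" "set_pmf P \<inter> - X \<noteq> {}"
    using measure_pmf_zero_iff[of P X] measure_pmf_zero_iff[of P "- X"] assms p1 compl
    by (auto simp: p_def)
  have split: "P = bernoulli_pmf p \<bind> (\<lambda>b. if b then cond_pmf P X else cond_pmf P (- X))"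
    using assms p1 compl
    by (intro pmf_eqI) (simp add: pmf_bind pmf_cond[OF ne(1)] pmf_cond[OF ne(2)] p_def)
  have "cond_pmf P (- X) \<bind> (\<lambda>z. if z \<in> X then Q z else R) = R"
    by (subst bind_pmf_cong[where g = "\<lambda>_. R"]) (auto simp: set_cond_pmf[OF ne(2)])
  moreover have "cond_pmf P X \<bind> (\<lambda>z. if z \<in> X then Q z else R) = cond_pmf P X \<bind> Q"
    by (intro bind_pmf_cong) (auto simp: set_cond_pmf[OF ne(1)])
  ultimately show ?thesis
    by (subst split) (auto simp: bind_assoc_pmf intro!: bind_pmf_cong)
qed

lemma map_filter_replicate_pmf:
  fixes P :: "'a pmf" and X :: "'a set"
  defines "p \<equiv> measure_pmf.prob P X"
  assumes "p > 0"
  shows "map_pmf (filter (\<lambda>z. z \<in> X)) (replicate_pmf M P) =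
         binomial_pmf M p \<bind> (\<lambda>k. replicate_pmf k (cond_pmf P X))"
proof (induction M)
  case 0
  then show ?case by (simp add: binomial_pmf_0 bind_return_pmf p_def)
next
  case (Suc M)
  define C where "C = cond_pmf P X"
  define R where "R = binomial_pmf M p \<bind> (\<lambda>k. replicate_pmf k C)"
  have p01: "p \<in> {0..1}" by (simp add: p_def)
  have "map_pmf (filter (\<lambda>z. z \<in> X)) (replicate_pmf (Suc M) P) =
        P \<bind> (\<lambda>z. map_pmf (if z \<in> X then Cons z else id)
                              (map_pmf (filter (\<lambda>z. z \<in> X)) (replicate_pmf M P)))"
    by (auto simp: map_bind_pmf map_pmf_def[symmetric] pmf.map_comp o_def
             intro!: bind_pmf_cong pmf.map_cong)
  also have "\<dots> = P \<bind> (\<lambda>z. if z \<in> X then map_pmf (Cons z) R else R)"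
    using Suc by (intro bind_pmf_cong) (auto simp: R_def C_def)
  also have "\<dots> = bernoulli_pmf p \<bind> (\<lambda>b. if b then C \<bind> (\<lambda>z. map_pmf (Cons z) R) else R)"
    using \<open>p > 0\<close> unfolding C_def p_def by (rule bind_pmf_if_mem)
  also have "\<dots> = binomial_pmf (Suc M) p \<bind> (\<lambda>k. replicate_pmf k C)"
    by (auto simp: binomial_pmf_Suc[OF p01] R_def map_bind_pmf map_pmf_def bind_assoc_pmf
                   bind_return_pmf intro!: bind_pmf_cong intro: bind_commute_pmf)
  finally show ?case unfolding C_def .
qed

lemma expectation_binomial_pmf_Suc:
  fixes f :: "nat \<Rightarrow> real"
  assumes p: "p \<in> {0..1}"
  shows "measure_pmf.expectation (binomial_pmf (Suc M) p) f =
         p * measure_pmf.expectation (binomial_pmf M p) (\<lambda>k. f (Suc k)) +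
         (1 - p) * measure_pmf.expectation (binomial_pmf M p) f"
proof -
  have fin: "finite (set_pmf (binomial_pmf (Suc M) p))"
    using p by auto
  have "measure_pmf.expectation (binomial_pmf (Suc M) p) f =
        measure_pmf.expectation (bernoulli_pmf p) (\<lambda>b. measure_pmf.expectation
          (map_pmf (\<lambda>k. (if b then 1 else 0) + k) (binomial_pmf M p)) f)"
    using fin unfolding binomial_pmf_Suc[OF p] map_pmf_def by (rule expectation_bind_pmf_finite)
  then show ?thesis
    using p by simp
qed

lemma expectation_binomial_pmf_real:
  assumes "p \<in> {0..1}"
  shows "measure_pmf.expectation (binomial_pmf M p) real = M * p"
proof (induction M)
  case 0
  then show ?case using assms by (simp add: binomial_pmf_0)
next
  case (Suc M)
  then show ?case
    using assms by (simp add: expectation_binomial_pmf_Suc Bochner_Integration.integral_add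
                              algebra_simps)
qed

lemma expectation_binomial_pmf_square:
  assumes "p \<in> {0..1}"
  shows "measure_pmf.expectation (binomial_pmf M p) (\<lambda>k. (real k)\<^sup>2) = M * p * (1 - p) + (M * p)\<^sup>2"
proof (induction M)
  case 0
  then show ?case using assms by (simp add: binomial_pmf_0)
next
  case (Suc M)
  have "(\<lambda>k. (real (Suc k))\<^sup>2) = (\<lambda>k. (real k)\<^sup>2 + (2 * real k + 1))"
    by (auto simp: power2_eq_square algebra_simps)
  then show ?case
    using Suc assms
    by (simp add: expectation_binomial_pmf_Suc expectation_binomial_pmf_real
                  Bochner_Integration.integral_add del: of_nat_Suc)
       (simp add: algebra_simps power2_eq_square)
qed

lemma variance_binomial_pmf:
  assumes "p \<in> {0..1}"
  shows "measure_pmf.variance (binomial_pmf M p) real = M * p * (1 - p)"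
  using assms
  by (subst measure_pmf.variance_eq)
     (auto simp: expectation_binomial_pmf_real expectation_binomial_pmf_square)

lemma prob_binomial_pmf_below_half_mean:
  assumes p: "p \<in> {0..1}" and m: "real m \<le> M * p / 2" and pos: "0 < M * p"
  shows "measure_pmf.prob (binomial_pmf M p) {..<m} \<le> 4 / (M * p)"
proof -
  have "{..<m} \<subseteq> {k. \<bar>real k - M * p\<bar> \<ge> M * p / 2}"
  proof
    fix k assume "k \<in> {..<m}"
    then have "real k \<le> real m"
      by simp
    then have "M * p / 2 \<le> M * p - real k"
      using m by linarith
    also have "\<dots> \<le> \<bar>real k - M * p\<bar>"
      by linarith
    finally show "k \<in> {k. \<bar>real k - M * p\<bar> \<ge> M * p / 2}"
      by simp
  qed
  then have "measure_pmf.prob (binomial_pmf M p) {..<m} \<le>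
        measure_pmf.prob (binomial_pmf M p) {k. \<bar>real k - M * p\<bar> \<ge> M * p / 2}"
    by (intro measure_pmf.finite_measure_mono) auto
  also have "\<dots> \<le> measure_pmf.variance (binomial_pmf M p) real / (M * p / 2)\<^sup>2"
    using measure_pmf.Chebyshev_inequality[where M = "binomial_pmf M p" and f = real and a = "M * p / 2"] p pos
    by (simp add: expectation_binomial_pmf_real)
  also have "\<dots> = 4 * (1 - p) / (M * p)"
  proof -
    have "p > 0" "real M > 0"
      using p pos by (auto simp: zero_less_mult_iff)
    then show ?thesis
      unfolding variance_binomial_pmf[OF p] by (simp add: power2_eq_square field_simps)
  qed
  also have "\<dots> \<le> 4 / (M * p)"
    using p pos by (intro divide_right_mono) auto
  finally show ?thesis .
qed

lemma mass_times_binomial_lower_tail_le: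
  fixes c p :: real
  assumes c: "c > 0" and M: "real M \<ge> c * real (max (2 * m) 8)" and p: "0 < p" "p \<le> 1"
  shows "p * measure_pmf.prob (binomial_pmf M p) {..<m} \<le> 1 / c"
proof (cases "p \<le> 1 / c")
  case True
  have "p * measure_pmf.prob (binomial_pmf M p) {..<m} \<le> p"
    using p by (intro mult_left_le) auto
  then show ?thesis using True by simp
next
  case False
  then have "p * c > 1"
    using c by (simp add: field_simps)
  then have "real (max (2 * m) 8) \<le> (p * c) * real (max (2 * m) 8)"
    by (simp add: mult_le_cancel_right1)
  also have "\<dots> \<le> p * real M"
    using M p by (simp add: mult.assoc)
  finally have "real M * p \<ge> real (max (2 * m) 8)"
    by (simp add: mult.commute)
  then have "measure_pmf.prob (binomial_pmf M p) {..<m} \<le> 4 / (M * p)"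
    using p by (intro prob_binomial_pmf_below_half_mean) auto
  then have "p * measure_pmf.prob (binomial_pmf M p) {..<m} \<le> p * (4 / (M * p))"
    using p by (intro mult_left_mono) auto
  also have "\<dots> = 4 / M"
    using p by simp
  also have "\<dots> \<le> 1 / c"
  proof -
    have "c * 8 \<le> c * real (max (2 * m) 8)"
      using c by (intro mult_left_mono) auto
    then have "c * 8 \<le> real M"
      using M by linarith
    then show ?thesis
      using c by (simp add: field_simps)
  qed
  finally show ?thesis .
qed

lemma sat_list_update_None:
  assumes "i < length l" "l ! i = None"
  shows "sat (l[i := Some b]) x \<longleftrightarrow> sat l x \<and> x ! i = b"
  using assms unfolding sat_def by (auto simp: nth_list_update)

lemma depth_list_update_None:
  assumes "i < length l" "l ! i = None"
  shows "depth (l[i := Some b]) = Suc (depth l)"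
  using assms unfolding depth_def
proof (induction l arbitrary: i)
  case (Cons a l)
  then show ?case by (cases i) auto
qed simp

lemma finite_restr_depth: "finite (restr_depth n d)"
proof (rule finite_subset)
  show "restr_depth n d \<subseteq> {xs. set xs \<subseteq> UNIV \<and> length xs = n}"
    by (auto simp: restr_depth_def)
qed (rule finite_lists_length_eq, simp)

lemma is_dtree_subset_restr_depth: "is_dtree n d T \<Longrightarrow> T \<subseteq> restr_depth n d"
proof (induction rule: is_dtree.induct)
  case (leaf n)
  then show ?case by (simp add: restr_depth_def depth_def)
next
  case (node i n d L0 L1)
  then show ?case by (auto simp: restr_depth_def depth_list_update_None)
qed

lemma finite_is_dtree_leaves: "is_dtree n d T \<Longrightarrow> finite T"
  using is_dtree_subset_restr_depth finite_restr_depth by (rule finite_subset)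

lemma finite_is_dtree: "finite {T. is_dtree n d T}"
proof (rule finite_subset)
  show "{T. is_dtree n d T} \<subseteq> Pow (restr_depth n d)"
    using is_dtree_subset_restr_depth by blast
qed (simp add: finite_restr_depth)

lemma card_is_dtree: "is_dtree n d T \<Longrightarrow> card T \<le> 2 ^ d"
proof (induction rule: is_dtree.induct)
  case (leaf n)
  then show ?case by simp
next
  case (node i n d L0 L1)
  have "finite L0" "finite L1"
    using node.hyps finite_is_dtree_leaves by blast+
  then have "card ((\<lambda>l. l[i := Some False]) ` L0 \<union> (\<lambda>l. l[i := Some True]) ` L1) \<le> card L0 + card L1"
    by (intro order_trans[OF card_Un_le] add_mono card_image_le)
  then show ?case using node.IH by simp
qed

lemma is_dtree_sat_leaves_singleton: "is_dtree n d T \<Longrightarrow> \<exists>l. {l \<in> T. sat l x} = {l}"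
proof (induction rule: is_dtree.induct)
  case (leaf n)
  then show ?case by (auto simp: sat_def)
next
  case (node i n d L0 L1)
  define b where "b = x ! i"
  define L where "L = (if b then L1 else L0)"
  obtain l where l: "{l \<in> L. sat l x} = {l}"
    using node.IH by (cases b) (auto simp: L_def)
  have "\<forall>l\<in>L0 \<union> L1. i < length l"
    using node.hyps is_dtree_subset_restr_depth by (fastforce simp: restr_depth_def)
  then have "{l \<in> (\<lambda>l. l[i := Some False]) ` L0 \<union> (\<lambda>l. l[i := Some True]) ` L1. sat l x} =
             (\<lambda>l. l[i := Some b]) ` {l \<in> L. sat l x}"
    using node.hyps(4) by (auto simp: sat_list_update_None L_def b_def)
  then show ?case using l by auto
qed

lemma is_dtree_ex1_leaf: "is_dtree n d T \<Longrightarrow> \<exists>!l. l \<in> T \<and> sat l x"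
  using is_dtree_sat_leaves_singleton[of n d T x]
  by (metis (mono_tags, lifting) mem_Collect_eq singletonD singletonI)

lemma is_dtree_ex_leaf: "is_dtree n d T \<Longrightarrow> \<exists>l\<in>T. sat l x"
  using ex1_implies_ex[OF is_dtree_ex1_leaf] by (simp add: Bex_def)

lemma is_dtree_leaf_unique:
  assumes "is_dtree n d T" "l \<in> T" "l' \<in> T" "sat l x" "sat l' x"
  shows "l = l'"
  using is_dtree_ex1_leaf[OF assms(1), of x] assms(2-) by blast

lemma tree_comp_eq:
  assumes "is_dtree n d T" "l \<in> T" "sat l x"
  shows "tree_comp T H x = H l x"
  unfolding tree_comp_def using the1_equality[OF is_dtree_ex1_leaf[OF assms(1)], of l] assms(2,3)
  by simp

lemma error_tree_comp:
  assumes T: "is_dtree n d T"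
  shows "error (tree_comp T H) P = (\<Sum>l\<in>T. measure_pmf.prob P {(x, y). sat l x \<and> H l x \<noteq> y})"
proof -
  have "tree_comp T H x \<noteq> y \<longleftrightarrow> (\<exists>l\<in>T. sat l x \<and> H l x \<noteq> y)" for x y
  proof -
    obtain l where l: "l \<in> T" "sat l x"
      using is_dtree_ex_leaf[OF T] by blast
    then have "(\<exists>l'\<in>T. sat l' x \<and> H l' x \<noteq> y) \<longleftrightarrow> H l x \<noteq> y"
      using is_dtree_leaf_unique[OF T] by blast
    then show ?thesis
      using tree_comp_eq[OF T l] by simp
  qed
  then have "{(x, y). tree_comp T H x \<noteq> y} = (\<Union>l\<in>T. {(x, y). sat l x \<and> H l x \<noteq> y})"
    by auto
  moreover have "disjoint_family_on (\<lambda>l. {(x, y). sat l x \<and> H l x \<noteq> y}) T"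
    by (auto simp: disjoint_family_on_def dest: is_dtree_leaf_unique[OF T])
  moreover have "finite T"
    using T by (rule finite_is_dtree_leaves)
  ultimately show ?thesis
    unfolding error_def by (simp add: measure_pmf.finite_measure_finite_Union)
qed

lemma sum_prob_leaves_eq_1:
  assumes T: "is_dtree n d T"
  shows "(\<Sum>l\<in>T. measure_pmf.prob P {(x, y). sat l x}) = 1"
proof -
  have "disjoint_family_on (\<lambda>l. {(x, y). sat l x}) T"
    by (auto simp: disjoint_family_on_def dest: is_dtree_leaf_unique[OF T])
  moreover have "finite T"
    using T by (rule finite_is_dtree_leaves)
  ultimately have "measure_pmf.prob P (\<Union>l\<in>T. {(x, y). sat l x}) =
                   (\<Sum>l\<in>T. measure_pmf.prob P {(x, y). sat l x})"
    by (intro measure_pmf.finite_measure_finite_Union) auto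
  moreover have "(\<Union>l\<in>T. {(x, y). sat l x}) = UNIV"
    using is_dtree_ex_leaf[OF T] by fast
  ultimately show ?thesis
    by (metis measure_pmf.prob_space space_measure_pmf)
qed

lemma Min_tree_error_bounds:
  assumes "is_dtree n d T"
  shows "Min {error (tree_comp T' H) P | T'. is_dtree n d T'} \<in> {0 .. error (tree_comp T H) P}"
proof -
  define E where "E = {error (tree_comp T' H) P | T'. is_dtree n d T'}"
  have "E = (\<lambda>T'. error (tree_comp T' H) P) ` {T'. is_dtree n d T'}"
    by (auto simp: E_def)
  then have fin: "finite E"
    using finite_is_dtree by simp
  have mem: "error (tree_comp T H) P \<in> E"
    using assms by (auto simp: E_def)
  then have "Min E \<in> E"
    using fin by (intro Min_in) auto
  then have "0 \<le> Min E"
    by (auto simp: E_def error_def)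
  moreover have "Min E \<le> error (tree_comp T H) P"
    using fin mem by (rule Min_le)
  ultimately show ?thesis
    by (simp add: E_def)
qed

lemma expectation_Min_tree_error_le:
  assumes T: "is_dtree n d T"
  shows "measure_pmf.expectation Q (\<lambda>H. Min {error (tree_comp T' H) P | T'. is_dtree n d T'})
         \<le> measure_pmf.expectation Q (\<lambda>H. error (tree_comp T H) P)"
proof (rule integral_mono)
  have error_le_1: "\<bar>error h P\<bar> \<le> 1" for h
    by (simp add: error_def)
  moreover have "\<bar>Min {error (tree_comp T' H) P | T'. is_dtree n d T'}\<bar> \<le> 1" for H
    using Min_tree_error_bounds[OF T, of H P] error_le_1[of "tree_comp T H"] by auto
  ultimately show "integrable Q (\<lambda>H. error (tree_comp T H) P)"
    "integrable Q (\<lambda>H. Min {error (tree_comp T' H) P | T'. is_dtree n d T'})"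
    by (auto intro!: integrable_measure_pmf_bounded[where B = 1])
qed (use Min_tree_error_bounds[OF T] in auto)

lemma hyp_map_component:
  assumes "\<rho> \<in> restr_depth n d"
  shows "map_pmf (\<lambda>H. H \<rho>) (hyp_map n d A S) = S \<bind> (\<lambda>S. A (restrict_sample S \<rho>))"
  using assms finite_restr_depth[of n d]
  by (simp add: hyp_map_def map_bind_pmf Pi_pmf_component)

lemma cond_pmf_labeled:
  assumes "set_pmf D \<inter> {x. sat l x} \<noteq> {}"
  shows "cond_pmf (labeled D f) {(x, y). sat l x} = labeled (restrict_dist D l) f"
proof -
  have "(\<lambda>x. (x, f x)) -` {(x, y). sat l x} = {x. sat l x}"
    by auto
  then show ?thesis
    unfolding labeled_def restrict_dist_def using assms by (subst cond_map_pmf) auto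
qed

lemma learns_expectation_le:
  assumes "learns C A eps m D" "f \<in> C" "0 \<le> eps"
  shows "measure_pmf.expectation (replicate_pmf k (labeled D f) \<bind> A) (\<lambda>h. error h (labeled D f))
         \<le> eps + indicator {..<m} k"
proof (cases "k < m")
  case True
  have "measure_pmf.expectation (replicate_pmf k (labeled D f) \<bind> A) (\<lambda>h. error h (labeled D f))
        \<le> measure_pmf.expectation (replicate_pmf k (labeled D f) \<bind> A) (\<lambda>h. 1)"
    by (intro integral_mono integrable_measure_pmf_bounded[where B = 1]) (auto simp: error_def)
  then show ?thesis using True assms(3) by simp
next
  case False
  then show ?thesis using assms unfolding learns_def by auto
qed

lemma expected_leaf_error_thinned:
  fixes D :: "point pmf" and f :: hypothesis and A :: "sample \<Rightarrow> hypothesis pmf"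
    and l :: restriction and eps :: real
  defines "P \<equiv> labeled D f" and "p \<equiv> measure_pmf.prob (labeled D f) {(x, y). sat l x}"
  assumes pos: "p > 0" and learns: "learns C A eps m (restrict_dist D l)" and "f \<in> C" "0 \<le> eps"
  shows "measure_pmf.expectation (replicate_pmf M P \<bind> (\<lambda>S. A (restrict_sample S l)))
           (\<lambda>h. measure_pmf.prob P {(x, y). sat l x \<and> h x \<noteq> y})
         \<le> p * (eps + measure_pmf.prob (binomial_pmf M p) {..<m})"
proof -
  define X where "X = {(x :: point, y :: bool). sat l x}"
  define Pl where "Pl = cond_pmf P X"
  have p01: "p \<in> {0..1}"
    by (simp add: p_def)
  have "set_pmf D \<inter> {x. sat l x} \<noteq> {}"
    using pos measure_pmf_zero_iff[of P X] by (auto simp: P_def X_def p_def labeled_def)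
  then have Pl: "Pl = labeled (restrict_dist D l) f"
    unfolding Pl_def P_def X_def by (rule cond_pmf_labeled)
  have "replicate_pmf M P \<bind> (\<lambda>S. A (restrict_sample S l)) =
        map_pmf (filter (\<lambda>z. z \<in> X)) (replicate_pmf M P) \<bind> A"
    by (simp add: bind_map_pmf restrict_sample_def X_def case_prod_unfold)
  also have "\<dots> = binomial_pmf M p \<bind> (\<lambda>k. replicate_pmf k Pl \<bind> A)"
    using map_filter_replicate_pmf[of P X M] pos
    by (simp add: P_def p_def X_def Pl_def bind_assoc_pmf)
  finally have sample: "replicate_pmf M P \<bind> (\<lambda>S. A (restrict_sample S l)) =
                        binomial_pmf M p \<bind> (\<lambda>k. replicate_pmf k Pl \<bind> A)" .
  have leaf_error: "measure_pmf.prob P {(x, y). sat l x \<and> h x \<noteq> y} = p * error h Pl" for h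
  proof -
    have "X \<inter> {(x, y). h x \<noteq> y} = {(x, y). sat l x \<and> h x \<noteq> y}"
      by (auto simp: X_def)
    then show ?thesis
      using measure_cond_pmf[of P X "{(x, y). h x \<noteq> y}"] pos
      by (simp add: error_def Pl_def p_def X_def P_def)
  qed
  have "measure_pmf.expectation (replicate_pmf M P \<bind> (\<lambda>S. A (restrict_sample S l)))
          (\<lambda>h. measure_pmf.prob P {(x, y). sat l x \<and> h x \<noteq> y}) =
        p * measure_pmf.expectation (binomial_pmf M p \<bind> (\<lambda>k. replicate_pmf k Pl \<bind> A))
          (\<lambda>h. error h Pl)"
    unfolding sample leaf_error by simp
  also have "measure_pmf.expectation (binomial_pmf M p \<bind> (\<lambda>k. replicate_pmf k Pl \<bind> A))
          (\<lambda>h. error h Pl) =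
        measure_pmf.expectation (binomial_pmf M p)
          (\<lambda>k. measure_pmf.expectation (replicate_pmf k Pl \<bind> A) (\<lambda>h. error h Pl))"
    by (rule expectation_bind_pmf_bounded[where B = 1]) (simp add: error_def)
  also have "\<dots> \<le> measure_pmf.expectation (binomial_pmf M p) (\<lambda>k. eps + indicator {..<m} k)"
    using p01 learns_expectation_le[OF learns \<open>f \<in> C\<close> \<open>0 \<le> eps\<close>]
    by (intro integral_mono) (auto simp: Pl)
  also have "\<dots> = eps + measure_pmf.prob (binomial_pmf M p) {..<m}"
    using p01 by (simp add: Bochner_Integration.integral_add)
  finally show ?thesis
    using p01 by (simp add: mult_left_mono)
qed

lemma expected_leaf_error_le:
  fixes D :: "point pmf" and f :: hypothesis and A :: "sample \<Rightarrow> hypothesis pmf"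
    and l :: restriction and eps c :: real
  defines "P \<equiv> labeled D f"
  assumes eps: "eps > 0" and c: "c > 0" and M: "real M \<ge> c / eps * real (max (2 * m) 8)"
    and "f \<in> C"
    and learns: "set_pmf D \<inter> {x. sat l x} \<noteq> {} \<Longrightarrow> learns C A eps m (restrict_dist D l)"
  shows "measure_pmf.expectation (replicate_pmf M P \<bind> (\<lambda>S. A (restrict_sample S l)))
           (\<lambda>h. measure_pmf.prob P {(x, y). sat l x \<and> h x \<noteq> y})
         \<le> measure_pmf.prob P {(x, y). sat l x} * eps + eps / c"
proof (cases "measure_pmf.prob P {(x, y). sat l x} > 0")
  case True
  define p where "p = measure_pmf.prob P {(x, y). sat l x}"
  have "set_pmf D \<inter> {x. sat l x} \<noteq> {}"
    using True measure_pmf_zero_iff[of P "{(x, y). sat l x}"] by (auto simp: P_def labeled_def)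
  then have "measure_pmf.expectation (replicate_pmf M P \<bind> (\<lambda>S. A (restrict_sample S l)))
               (\<lambda>h. measure_pmf.prob P {(x, y). sat l x \<and> h x \<noteq> y})
             \<le> p * (eps + measure_pmf.prob (binomial_pmf M p) {..<m})"
    using True learns \<open>f \<in> C\<close> eps unfolding P_def p_def
    by (intro expected_leaf_error_thinned) auto
  also have "\<dots> \<le> p * eps + eps / c"
    using mass_times_binomial_lower_tail_le[where c = "c / eps" and M = M and m = m and p = p] True eps c M
    by (simp add: p_def algebra_simps)
  finally show ?thesis
    unfolding p_def .
next
  case False
  then have "measure_pmf.prob P {(x, y). sat l x} = 0"
    by (simp add: zero_less_measure_iff)
  moreover have "measure_pmf.prob P {(x, y). sat l x \<and> h x \<noteq> y} \<le>
                 measure_pmf.prob P {(x, y). sat l x}" for h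
    by (rule measure_pmf.finite_measure_mono) auto
  ultimately have "measure_pmf.prob P {(x, y). sat l x \<and> h x \<noteq> y} = 0" for h
    by (simp add: measure_le_0_iff)
  then show ?thesis
    using eps c by simp
qed

lemma expected_tree_error_le:
  fixes D :: "point pmf" and f :: hypothesis and A :: "sample \<Rightarrow> hypothesis pmf" and eps :: real
  defines "P \<equiv> labeled D f"
  assumes T: "is_dtree n d T" and eps: "eps > 0"
    and M: "real M \<ge> 2 ^ d / eps * real (max (2 * m) 8)" and "f \<in> C"
    and learns: "\<forall>l\<in>T. set_pmf D \<inter> {x. sat l x} \<noteq> {} \<longrightarrow> learns C A eps m (restrict_dist D l)"
  shows "measure_pmf.expectation (hyp_map n d A (replicate_pmf M P))
           (\<lambda>H. error (tree_comp T H) P) \<le> 2 * eps"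
proof -
  define HM where "HM = hyp_map n d A (replicate_pmf M P)"
  have "measure_pmf.expectation HM (\<lambda>H. error (tree_comp T H) P) =
        (\<Sum>l\<in>T. measure_pmf.expectation HM (\<lambda>H. measure_pmf.prob P {(x, y). sat l x \<and> H l x \<noteq> y}))"
    unfolding error_tree_comp[OF T]
    by (intro Bochner_Integration.integral_sum integrable_measure_pmf_bounded[where B = 1]) auto
  also have "\<dots> = (\<Sum>l\<in>T. measure_pmf.expectation
                    (replicate_pmf M P \<bind> (\<lambda>S. A (restrict_sample S l)))
                    (\<lambda>h. measure_pmf.prob P {(x, y). sat l x \<and> h x \<noteq> y}))"
    using is_dtree_subset_restr_depth[OF T]
    by (intro sum.cong refl) (auto simp: HM_def hyp_map_component[symmetric])
  also have "\<dots> \<le> (\<Sum>l\<in>T. measure_pmf.prob P {(x, y). sat l x} * eps + eps / 2 ^ d)"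
    using learns eps M \<open>f \<in> C\<close> unfolding P_def
    by (intro sum_mono expected_leaf_error_le) auto
  also have "\<dots> = eps + card T * (eps / 2 ^ d)"
    by (simp add: sum.distrib sum_distrib_right[symmetric] sum_prob_leaves_eq_1[OF T])
  also have "\<dots> \<le> eps + 2 ^ d * (eps / 2 ^ d)"
    using card_is_dtree[OF T] eps by (intro add_left_mono mult_right_mono) auto
  also have "\<dots> = 2 * eps"
    by simp
  finally show ?thesis
    unfolding HM_def .
qed

theorem claim6p6:
  fixes n d m m_train :: nat and eps :: real
    and C :: "hypothesis set" and DD :: "point pmf set" and Dstar :: "point pmf"
    and A :: "sample \<Rightarrow> hypothesis pmf" and f :: hypothesis
  assumes "eps > 0"
    and "\<forall>D\<in>DD. set_pmf D \<subseteq> cube n"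
    and "closed_under_restrictions n DD"
    and "set_pmf Dstar \<subseteq> cube n"
    and "has_decomposition n d DD Dstar"
    and "\<forall>D\<in>DD. learns C A eps m D"
    and "real m_train \<ge> 2 ^ d / eps * real (max (2 * m) 8)"
    and "f \<in> C"
  shows "measure_pmf.expectation (hyp_map n d A (replicate_pmf m_train (labeled Dstar f)))
           (\<lambda>H. Min {error (tree_comp T H) (labeled Dstar f) | T. is_dtree n d T}) \<le> 2 * eps"
proof -
  obtain T where T: "is_dtree n d T"
    and "\<forall>l\<in>T. set_pmf Dstar \<inter> {x. sat l x} \<noteq> {} \<longrightarrow> restrict_dist Dstar l \<in> DD"
    using assms(5) unfolding has_decomposition_def by blast
  then have "measure_pmf.expectation (hyp_map n d A (replicate_pmf m_train (labeled Dstar f)))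
               (\<lambda>H. error (tree_comp T H) (labeled Dstar f)) \<le> 2 * eps"
    using assms(1,6,7,8) by (intro expected_tree_error_le) auto
  then show ?thesis
    using expectation_Min_tree_error_le[OF T] by (rule order_trans[rotated])
qed

end
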